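(* Let $D$ be a centrally finite division algebra, let $R=D[t_1,\ldots,t_n]$ be the ring of polynomials in $n$ central commuting variables over $D$, let $A$ be a finite subset of $R$, and let $S=D[A]$ be the subring of $R$ generated by $D\cup A$. Then $S$ is centrally finitely generated over $D$.
   Context: All rings are associative with unity. A division algebra is centrally finite if it is finite-dimensional over its center. A ring $S\supseteq D$ is centrally finitely generated over $D$ if $S$ is isomorphic, compatibly with the inclusion of $D$, to a quotient $D[x_1,\ldots,x_m]/I$ of a polynomial ring in central commuting variables by a two-sided ideal $I$ with $D\cap I=\{0\}$; equivalently, $S$ is generated as a ring by $D$ together with finitely many pairwise commuting elements each commuting with every element of $D$. *)

theory Defs
  imports Main "HOL-Library.Poly_Mapping"
begin

text \<open>Polynomials over a (possibly non-commutative) ring 'a in central commuting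
variables indexed by nat: a polynomial is a finitely supported map from monomials
(finitely supported exponent vectors) to coefficients, with the
convolution product of Poly_Mapping (variables commute with everything).\<close>

type_synonym 'a mpoly = "(nat \<Rightarrow>\<^sub>0 nat) \<Rightarrow>\<^sub>0 'a"

definition center :: "'a::ring_1 set" where
  "center = {z. \<forall>x. z * x = x * z}"

definition centrally_finite :: "'a::division_ring itself \<Rightarrow> bool" where
  "centrally_finite _ \<longleftrightarrow>
     (\<exists>B::'a set. finite B \<and>
        (\<forall>d::'a. \<exists>c. (\<forall>b\<in>B. c b \<in> center) \<and> d = (\<Sum>b\<in>B. c b * b)))"

definition const :: "'a::zero \<Rightarrow> 'a mpoly" where
  "const d = Poly_Mapping.single 0 d"

definition poly_ring :: "nat \<Rightarrow> ('a::zero) mpoly set" where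
  "poly_ring n = {p :: 'a mpoly. \<forall>mon\<in>Poly_Mapping.keys p. Poly_Mapping.keys mon \<subseteq> {..<n}}"

inductive_set gen_ring :: "('a::ring_1) mpoly set \<Rightarrow> 'a mpoly set"
  for A :: "'a mpoly set" where
  gen_const: "const d \<in> gen_ring A"
| gen_elem: "a \<in> A \<Longrightarrow> a \<in> gen_ring A"
| gen_add: "p \<in> gen_ring A \<Longrightarrow> q \<in> gen_ring A \<Longrightarrow> p + q \<in> gen_ring A"
| gen_uminus: "p \<in> gen_ring A \<Longrightarrow> - p \<in> gen_ring A"
| gen_mult: "p \<in> gen_ring A \<Longrightarrow> q \<in> gen_ring A \<Longrightarrow> p * q \<in> gen_ring A"

text \<open>S (a ring containing the constants D) is centrally finitely generated over D:
S is isomorphic, compatibly with D, to a quotient D[x_1..x_m]/I with I \<inter> D = 0.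
Equivalently (first isomorphism theorem) there is a surjective unital ring
homomorphism from D[x_0..x_{m-1}] onto S restricting to the identity on D; its
kernel is the ideal I, and I \<inter> D = 0 holds since the map is injective on D.\<close>
definition centrally_fg :: "('a::ring_1) mpoly set \<Rightarrow> bool" where
  "centrally_fg S \<longleftrightarrow>
     (\<exists>(m::nat) (\<phi>::'a mpoly \<Rightarrow> 'a mpoly).
        \<phi> ` poly_ring m = S \<and>
        (\<forall>p\<in>poly_ring m. \<forall>q\<in>poly_ring m. \<phi> (p + q) = \<phi> p + \<phi> q) \<and>
        (\<forall>p\<in>poly_ring m. \<forall>q\<in>poly_ring m. \<phi> (p * q) = \<phi> p * \<phi> q) \<and>
        \<phi> 1 = 1 \<and>
        (\<forall>d. \<phi> (const d) = const d))"

end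

theory Submission
  imports Defs
begin

(* Monomials are central in D[t], so D[A] is a sub-bimodule of D[t] over the constants D.
   Such a sub-bimodule N is spanned on the left over D by its central elements, since
   commutators with constants eliminate the terms of a combination of central monomials
   one at a time while staying in N. Hence the finite set A lies in the D-span of finitely
   many central elements g_0, ..., g_(m-1) of D[A]. Substituting g_i for x_i is a ring
   homomorphism from D[x_0, ..., x_(m-1)] fixing D, because the g_i are central; its image
   is a subring of D[A] containing D and A, so it is D[A]. *)

lemma const_add: "const (a + b) = const a + const b"
  by (simp add: const_def single_add)

lemma const_mult: "const (a * b) = const a * const (b::'a::ring_1)"
  by (simp add: const_def mult_single)

lemma const_0 [simp]: "const 0 = 0"
  by (simp add: const_def)

lemma const_1 [simp]: "const 1 = 1"
  by (simp add: const_def)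

lemma const_uminus: "const (- a) = - const (a::'a::ring_1)"
  by (simp add: const_def single_uminus)

lemma const_diff: "const (a - b) = const a - const (b::'a::ring_1)"
  by (simp add: const_def single_diff)

lemma poly_mapping_sum_single:
  "p = (\<Sum>k\<in>Poly_Mapping.keys p. Poly_Mapping.single k (Poly_Mapping.lookup p k))"
  by (rule poly_mapping_eqI) (auto simp: lookup_sum lookup_single when_def in_keys_iff)

lemma mpoly_sum_monomials:
  "(p::'a::ring_1 mpoly) =
     (\<Sum>k\<in>Poly_Mapping.keys p. const (Poly_Mapping.lookup p k) * Poly_Mapping.single k 1)"
  by (subst poly_mapping_sum_single) (simp add: const_def mult_single)

lemma centerI: "(\<And>x. z * x = x * z) \<Longrightarrow> z \<in> center"
  by (simp add: center_def)

lemma center_comm: "z \<in> center \<Longrightarrow> z * x = x * (z::'a::ring_1)"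
  by (simp add: center_def)

lemma center_0: "0 \<in> (center::'a::ring_1 set)"
  by (simp add: center_def)

lemma center_1: "1 \<in> (center::'a::ring_1 set)"
  by (simp add: center_def)

lemma center_add: "a \<in> center \<Longrightarrow> b \<in> center \<Longrightarrow> a + b \<in> (center::'a::ring_1 set)"
  by (simp add: center_def algebra_simps)

lemma center_mult: "a \<in> center \<Longrightarrow> b \<in> center \<Longrightarrow> a * b \<in> (center::'a::ring_1 set)"
  by (rule centerI) (metis center_comm mult.assoc)

lemma center_sum: "(\<And>i. i \<in> I \<Longrightarrow> f i \<in> center) \<Longrightarrow> sum f I \<in> (center::'a::ring_1 set)"
  by (induction I rule: infinite_finite_induct) (auto simp: center_0 center_add)

lemma center_power: "a \<in> center \<Longrightarrow> a ^ n \<in> (center::'a::ring_1 set)"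
  by (induction n) (auto simp: center_1 center_mult)

lemma const_in_center:
  assumes "c \<in> center"
  shows "const c \<in> (center::'a::ring_1 mpoly set)"
proof (rule centerI)
  fix p :: "'a mpoly"
  have "c * Poly_Mapping.lookup p k = Poly_Mapping.lookup p k * c" for k
    using assms center_comm by blast
  then show "const c * p = p * const c"
    by (subst (1 2) poly_mapping_sum_single[of p])
      (simp add: sum_distrib_left sum_distrib_right const_def mult_single)
qed

lemma single_one_in_center: "Poly_Mapping.single k 1 \<in> (center::'a::ring_1 mpoly set)"
proof (rule centerI)
  fix p :: "'a mpoly"
  show "Poly_Mapping.single k 1 * p = p * Poly_Mapping.single k 1"
    by (subst (1 2) poly_mapping_sum_single[of p])
      (simp add: sum_distrib_left sum_distrib_right mult_single add.commute[of k])
qed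

inductive_set const_span :: "'a::ring_1 mpoly set \<Rightarrow> 'a mpoly set" for W where
  zero: "0 \<in> const_span W"
| step: "w \<in> W \<Longrightarrow> x \<in> const_span W \<Longrightarrow> const d * w + x \<in> const_span W"

lemma const_span_least:
  assumes "0 \<in> T" "\<And>x y. x \<in> T \<Longrightarrow> y \<in> T \<Longrightarrow> x + y \<in> T"
    "\<And>d x. x \<in> T \<Longrightarrow> const d * x \<in> T" "W \<subseteq> T"
  shows "const_span W \<subseteq> T"
proof
  show "x \<in> T" if "x \<in> const_span W" for x
    using that by induction (use assms in auto)
qed

lemma const_span_add: "x \<in> const_span W \<Longrightarrow> y \<in> const_span W \<Longrightarrow> x + y \<in> const_span W"
  by (induction x rule: const_span.induct) (auto simp: add.assoc intro: const_span.intros)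

lemma const_span_const_mult: "x \<in> const_span W \<Longrightarrow> const e * x \<in> const_span W"
proof (induction x rule: const_span.induct)
  case (step w x d)
  have "const e * (const d * w + x) = const (e * d) * w + const e * x"
    by (simp add: const_mult distrib_left mult.assoc)
  with step show ?case
    by (simp add: const_span.step)
qed (simp add: const_span.zero)

lemma const_span_diff: "x \<in> const_span W \<Longrightarrow> y \<in> const_span W \<Longrightarrow> x - y \<in> const_span W"
  using const_span_add const_span_const_mult[of y W "- 1"] by (fastforce simp: const_uminus)

lemma const_span_base: "w \<in> W \<Longrightarrow> w \<in> const_span W"
  using const_span.step[OF _ const_span.zero, of w W 1] by simp

lemma const_span_mono: "V \<subseteq> W \<Longrightarrow> const_span V \<subseteq> const_span W"
  by (rule const_span_least)
    (auto intro: const_span.zero const_span_add const_span_const_mult const_span_base)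

lemma const_span_finite_support:
  "x \<in> const_span W \<Longrightarrow> \<exists>G. finite G \<and> G \<subseteq> W \<and> x \<in> const_span G"
proof (induction x rule: const_span.induct)
  case (step w x d)
  then obtain G where "finite G" "G \<subseteq> W" "x \<in> const_span G"
    by blast
  with step(1) show ?case
    using const_span_mono[of G "insert w G"]
    by (intro exI[of _ "insert w G"]) (auto intro: const_span.step)
qed (auto intro: const_span.zero)

lemma const_span_finite_subset:
  assumes "finite A" "A \<subseteq> const_span W"
  obtains G where "finite G" "G \<subseteq> W" "A \<subseteq> const_span G"
proof -
  obtain G where G: "\<And>a. a \<in> A \<Longrightarrow> finite (G a) \<and> G a \<subseteq> W \<and> a \<in> const_span (G a)"
    using const_span_finite_support assms(2) by (metis subsetD)
  show thesis
    using assms(1) G const_span_mono[of "G _" "\<Union> (G ` A)"]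
    by (intro that[of "\<Union> (G ` A)"]) blast+
qed

lemma const_span_commutator:
  assumes "W \<subseteq> center" "x \<in> const_span W"
  shows "const e * x - x * const e \<in> const_span W"
  using assms(2)
proof (induction x rule: const_span.induct)
  case (step w x d)
  have "w * const e = const e * w"
    using step.hyps(1) assms(1) center_comm by blast
  then have "const e * (const d * w + x) - (const d * w + x) * const e
     = const (e * d - d * e) * w + (const e * x - x * const e)"
    by (simp add: const_mult const_diff algebra_simps mult.assoc)
  with step show ?case
    by (simp add: const_span.step)
qed (simp add: const_span.zero)

lemma commutator_const_combination:
  assumes "\<And>i. i \<in> I \<Longrightarrow> z i \<in> center"
  shows "const e * (w + (\<Sum>i\<in>I. const (c i) * z i)) -
      (w + (\<Sum>i\<in>I. const (c i) * z i)) * const e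
    = (const e * w - w * const e) + (\<Sum>i\<in>I. const (e * c i - c i * e) * z i)"
proof -
  have "const e * (const (c i) * z i) - const (c i) * z i * const e
      = const (e * c i - c i * e) * z i" if "i \<in> I" for i
  proof -
    have "z i * const e = const e * z i"
      by (rule center_comm[OF assms[OF that]])
    then show ?thesis
      by (simp add: const_diff const_mult left_diff_distrib mult.assoc)
  qed
  then have "const e * (\<Sum>i\<in>I. const (c i) * z i) - (\<Sum>i\<in>I. const (c i) * z i) * const e
      = (\<Sum>i\<in>I. const (e * c i - c i * e) * z i)"
    by (simp add: sum_distrib_left sum_distrib_right flip: sum_subtractf)
  then show ?thesis
    by (simp add: distrib_left distrib_right diff_add_eq add_diff_eq)
qed

locale const_bimodule =
  fixes N :: "'a::division_ring mpoly set"
  assumes zero_mem: "0 \<in> N"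
    and add_mem: "x \<in> N \<Longrightarrow> y \<in> N \<Longrightarrow> x + y \<in> N"
    and const_mult_mem: "x \<in> N \<Longrightarrow> const d * x \<in> N"
    and mult_const_mem: "x \<in> N \<Longrightarrow> x * const d \<in> N"
begin

abbreviation central_span :: "'a mpoly set" where
  "central_span \<equiv> const_span (N \<inter> center)"

lemma diff_mem: "x \<in> N \<Longrightarrow> y \<in> N \<Longrightarrow> x - y \<in> N"
  using add_mem const_mult_mem[of y "- 1"] by (fastforce simp: const_uminus)

lemma central_span_subset: "central_span \<subseteq> N"
  by (rule const_span_least) (auto intro: zero_mem add_mem const_mult_mem)

lemma central_combination_mem_span:
  assumes "\<And>i. i \<in> I \<Longrightarrow> c i \<in> center" "\<And>i. i \<in> I \<Longrightarrow> z i \<in> center"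
    and "w \<in> central_span" "w + (\<Sum>i\<in>I. const (c i) * z i) \<in> N"
  shows "w + (\<Sum>i\<in>I. const (c i) * z i) \<in> central_span"
proof -
  let ?v = "\<Sum>i\<in>I. const (c i) * z i"
  have "?v \<in> center"
    using assms(1,2) by (intro center_sum center_mult const_in_center)
  moreover have "?v \<in> N"
    using diff_mem[OF assms(4)] central_span_subset assms(3) by fastforce
  ultimately show ?thesis
    using const_span_add[OF assms(3) const_span_base[of ?v]] by blast
qed

text \<open>Once one coefficient is 1, commuting with a constant e kills that term; if some other
  coefficient c i1 does not commute with e, the commutator is a combination with nonzero
  coefficient at i1, and subtracting a multiple of it kills the term at i1 instead.\<close>

lemma normalized_combination_mem_span:
  assumes z: "\<And>i. i \<in> I \<Longrightarrow> z i \<in> center"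
    and shorter: "\<And>j w d. j \<in> I \<Longrightarrow> d j = 0 \<Longrightarrow> w \<in> central_span \<Longrightarrow>
      w + (\<Sum>i\<in>I. const (d i) * z i) \<in> N \<Longrightarrow> w + (\<Sum>i\<in>I. const (d i) * z i) \<in> central_span"
    and "i0 \<in> I" "c i0 = 1" and w: "w \<in> central_span"
    and x_N: "w + (\<Sum>i\<in>I. const (c i) * z i) \<in> N"
  shows "w + (\<Sum>i\<in>I. const (c i) * z i) \<in> central_span"
proof (cases "\<forall>i\<in>I. c i \<in> center")
  case True
  then show ?thesis
    by (intro central_combination_mem_span[OF _ z w x_N]) auto
next
  case False
  then obtain i1 where "i1 \<in> I" "c i1 \<notin> center"
    by blast
  then obtain e where e: "c i1 * e \<noteq> e * c i1"
    unfolding center_def by blast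
  define b where "b i = e * c i - c i * e" for i
  let ?x = "w + (\<Sum>i\<in>I. const (c i) * z i)"
  let ?v = "\<Sum>i\<in>I. const (b i) * z i"
  have w_comm: "const e * w - w * const e \<in> central_span"
    by (rule const_span_commutator) (use w in auto)
  have "const e * ?x - ?x * const e \<in> N"
    by (intro diff_mem const_mult_mem mult_const_mem x_N)
  then have "(const e * w - w * const e) + ?v \<in> central_span"
    using shorter[OF \<open>i0 \<in> I\<close> _ w_comm, of b] \<open>c i0 = 1\<close>
    by (simp add: b_def commutator_const_combination[OF z])
  then have v: "?v \<in> central_span"
    using const_span_diff[OF _ w_comm] by fastforce
  define r where "r = c i1 * inverse (b i1)"
  have "b i1 \<noteq> 0"
    using e by (simp add: b_def)
  then have "c i1 - r * b i1 = 0"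
    by (simp add: r_def mult.assoc)
  moreover have "?x - const r * ?v = w + (\<Sum>i\<in>I. const (c i - r * b i) * z i)"
    by (simp add: const_diff const_mult left_diff_distrib sum_subtractf sum_distrib_left mult.assoc)
  moreover have "?x - const r * ?v \<in> N"
    using v central_span_subset by (blast intro: diff_mem x_N const_mult_mem)
  ultimately have "?x - const r * ?v \<in> central_span"
    using shorter[OF \<open>i1 \<in> I\<close>, of "\<lambda>i. c i - r * b i" w] w by (simp only:)
  from const_span_add[OF this const_span_const_mult[OF v, of r]] show ?thesis
    by simp
qed

lemma combination_mem_span:
  assumes "finite I" and "\<And>i. i \<in> I \<Longrightarrow> z i \<in> center"
    and "w \<in> central_span" and "w + (\<Sum>i\<in>I. const (d i) * z i) \<in> N"
  shows "w + (\<Sum>i\<in>I. const (d i) * z i) \<in> central_span"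
  using assms
proof (induction I arbitrary: w d rule: finite_psubset_induct)
  case (psubset I)
  have shorter: "w + (\<Sum>i\<in>I. const (d i) * z i) \<in> central_span"
    if "j \<in> I" "d j = 0" "w \<in> central_span" "w + (\<Sum>i\<in>I. const (d i) * z i) \<in> N" for j w d
  proof -
    have "(\<Sum>i\<in>I. const (d i) * z i) = (\<Sum>i\<in>I - {j}. const (d i) * z i)"
      using sum.remove[OF psubset.hyps(1) \<open>j \<in> I\<close>, of "\<lambda>i. const (d i) * z i"] \<open>d j = 0\<close>
      by simp
    moreover have "I - {j} \<subset> I"
      using \<open>j \<in> I\<close> by blast
    ultimately show ?thesis
      using psubset.IH[of "I - {j}" w d] psubset.prems(1) that(3,4) by simp
  qed
  show ?case
  proof (cases "\<exists>i0\<in>I. d i0 \<noteq> 0")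
    case True
    then obtain i0 where "i0 \<in> I" "d i0 \<noteq> 0"
      by blast
    define u where "u = inverse (d i0)"
    let ?x = "w + (\<Sum>i\<in>I. const (d i) * z i)"
    have "const u * ?x = const u * w + (\<Sum>i\<in>I. const (u * d i) * z i)"
      by (simp add: distrib_left sum_distrib_left const_mult mult.assoc)
    moreover have "const u * ?x \<in> N"
      using psubset.prems(3) by (rule const_mult_mem)
    ultimately have "const u * ?x \<in> central_span"
      using normalized_combination_mem_span[OF psubset.prems(1) shorter \<open>i0 \<in> I\<close>,
          where c = "\<lambda>i. u * d i"] \<open>d i0 \<noteq> 0\<close> const_span_const_mult[OF psubset.prems(2)]
      by (simp add: u_def)
    then have "const (d i0) * (const u * ?x) \<in> central_span"
      by (rule const_span_const_mult)
    then show ?thesis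
      using \<open>d i0 \<noteq> 0\<close> by (simp add: u_def flip: mult.assoc const_mult)
  next
    case False
    then show ?thesis
      using psubset.prems(2) by simp
  qed
qed

lemma subset_central_span: "N \<subseteq> central_span"
proof
  fix p
  assume "p \<in> N"
  then show "p \<in> central_span"
    using combination_mem_span[of "Poly_Mapping.keys p" "\<lambda>k. Poly_Mapping.single k 1" 0
        "Poly_Mapping.lookup p"]
    by (simp add: single_one_in_center const_span.zero flip: mpoly_sum_monomials)
qed

end

lemma gen_ring_const_bimodule: "const_bimodule (gen_ring A)"
  by unfold_locales (use gen_ring.gen_const[of 0] in \<open>auto intro: gen_ring.intros\<close>)

lemma gen_ring_one: "1 \<in> gen_ring A"
  using gen_ring.gen_const[of 1] by simp

lemma gen_ring_power: "p \<in> gen_ring A \<Longrightarrow> p ^ k \<in> gen_ring A"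
  by (induction k) (auto intro: gen_ring_one gen_ring.gen_mult)

lemma gen_ring_sum: "(\<And>i. i \<in> I \<Longrightarrow> f i \<in> gen_ring A) \<Longrightarrow> sum f I \<in> gen_ring A"
  by (induction I rule: infinite_finite_induct)
    (auto intro: gen_ring.gen_add gen_ring.gen_const[of 0, simplified])

lemma poly_ring_add: "p \<in> poly_ring m \<Longrightarrow> q \<in> poly_ring m \<Longrightarrow> p + q \<in> poly_ring m"
  unfolding poly_ring_def using keys_add[of p q] by blast

lemma poly_ring_mult:
  assumes "p \<in> poly_ring m" "q \<in> poly_ring m"
  shows "(p::'a::ring_1 mpoly) * q \<in> poly_ring m"
  unfolding poly_ring_def mem_Collect_eq
proof
  fix mon
  assume "mon \<in> Poly_Mapping.keys (p * q)"
  then obtain a b where "mon = a + b" "a \<in> Poly_Mapping.keys p" "b \<in> Poly_Mapping.keys q"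
    using keys_mult[of p q] by blast
  then show "Poly_Mapping.keys mon \<subseteq> {..<m}"
    using assms keys_add[of a b] unfolding poly_ring_def by blast
qed

lemma poly_ring_const: "const d \<in> poly_ring m"
  by (simp add: poly_ring_def const_def)

lemma poly_ring_var: "j < m \<Longrightarrow> Poly_Mapping.single (Poly_Mapping.single j 1) 1 \<in> poly_ring m"
  by (simp add: poly_ring_def)

primrec monomial_value :: "nat \<Rightarrow> (nat \<Rightarrow> 'a::ring_1) \<Rightarrow> (nat \<Rightarrow>\<^sub>0 nat) \<Rightarrow> 'a" where
  "monomial_value 0 g k = 1"
| "monomial_value (Suc m) g k = monomial_value m g k * g m ^ Poly_Mapping.lookup k m"

lemma monomial_value_zero [simp]: "monomial_value m g 0 = 1"
  by (induction m) auto

lemma monomial_value_var: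
  "monomial_value m g (Poly_Mapping.single j 1) = (if j < m then g j else 1)"
  by (induction m) (auto simp: lookup_single less_Suc_eq)

lemma monomial_value_in_center:
  "(\<And>i. i < m \<Longrightarrow> g i \<in> center) \<Longrightarrow> monomial_value m g k \<in> center"
  by (induction m) (auto simp: center_1 center_mult center_power)

lemma monomial_value_add:
  assumes "\<And>i. i < m \<Longrightarrow> g i \<in> center"
  shows "monomial_value m g (k + l) = monomial_value m g k * monomial_value m g l"
  using assms
proof (induction m)
  case (Suc m)
  let ?M = "monomial_value m g" and ?a = "g m ^ Poly_Mapping.lookup k m"
    and ?b = "g m ^ Poly_Mapping.lookup l m"
  have "?M (k + l) = ?M k * ?M l"
    using Suc by simp
  then have "monomial_value (Suc m) g (k + l) = ?M k * (?M l * ?a) * ?b"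
    by (simp add: lookup_add power_add mult.assoc)
  also have "?M l * ?a = ?a * ?M l"
    by (rule center_comm[OF center_power[OF Suc.prems[OF lessI]], symmetric])
  finally show ?case
    by (simp add: mult.assoc)
qed simp

lemma monomial_value_mem_gen_ring:
  "(\<And>i. i < m \<Longrightarrow> g i \<in> gen_ring A) \<Longrightarrow> monomial_value m g k \<in> gen_ring A"
  by (induction m) (auto intro: gen_ring_one gen_ring_power gen_ring.gen_mult)

text \<open>Substitution of g i for the variable i < m; variables \<ge> m are sent to 1.\<close>

definition insertion :: "nat \<Rightarrow> (nat \<Rightarrow> 'a::ring_1 mpoly) \<Rightarrow> 'a mpoly \<Rightarrow> 'a mpoly" where
  "insertion m g p =
     (\<Sum>k\<in>Poly_Mapping.keys p. const (Poly_Mapping.lookup p k) * monomial_value m g k)"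

lemma insertion_zero [simp]: "insertion m g 0 = 0"
  by (simp add: insertion_def)

lemma insertion_single: "insertion m g (Poly_Mapping.single k a) = const a * monomial_value m g k"
  by (simp add: insertion_def)

lemma insertion_const: "insertion m g (const d) = const d"
  by (simp add: const_def insertion_single)

lemma insertion_var:
  "j < m \<Longrightarrow> insertion m g (Poly_Mapping.single (Poly_Mapping.single j 1) 1) = g j"
  unfolding insertion_single monomial_value_var by simp

lemma insertion_add: "insertion m g (p + q) = insertion m g p + insertion m g q"
  unfolding insertion_def
  by (rule setsum_keys_plus_distrib) (auto simp: const_add distrib_right)

lemma insertion_sum: "insertion m g (sum f I) = (\<Sum>i\<in>I. insertion m g (f i))"
  by (induction I rule: infinite_finite_induct) (simp_all add: insertion_add)

lemma mult_as_double_sum: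
  "(p::'a::ring_1 mpoly) * q = (\<Sum>k\<in>Poly_Mapping.keys p. \<Sum>l\<in>Poly_Mapping.keys q.
     Poly_Mapping.single (k + l) (Poly_Mapping.lookup p k * Poly_Mapping.lookup q l))"
  by (subst (1) poly_mapping_sum_single[of p], subst (1) poly_mapping_sum_single[of q])
    (simp add: sum_distrib_left sum_distrib_right mult_single sum.swap[where A = "Poly_Mapping.keys q"])

lemma insertion_mult:
  assumes "\<And>i. i < m \<Longrightarrow> g i \<in> center"
  shows "insertion m g (p * q) = insertion m g p * insertion m g q"
proof -
  let ?M = "monomial_value m g"
  have factor: "const (a * b) * ?M (k + l) = const a * ?M k * (const b * ?M l)" for a b k l
  proof -
    have comm: "?M k * const b = const b * ?M k"
      by (rule center_comm[OF monomial_value_in_center[OF assms]])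
    have "const a * ?M k * (const b * ?M l) = const a * (?M k * const b) * ?M l"
      by (simp only: mult.assoc)
    also have "\<dots> = const (a * b) * ?M (k + l)"
      by (simp only: comm monomial_value_add[OF assms] const_mult mult.assoc)
    finally show ?thesis ..
  qed
  have "insertion m g (p * q) = (\<Sum>k\<in>Poly_Mapping.keys p. \<Sum>l\<in>Poly_Mapping.keys q.
      const (Poly_Mapping.lookup p k * Poly_Mapping.lookup q l) * ?M (k + l))"
    unfolding mult_as_double_sum[of p q] insertion_sum insertion_single ..
  also have "\<dots> = (\<Sum>k\<in>Poly_Mapping.keys p. \<Sum>l\<in>Poly_Mapping.keys q.
      const (Poly_Mapping.lookup p k) * ?M k * (const (Poly_Mapping.lookup q l) * ?M l))"
    by (simp only: factor)
  also have "\<dots> = insertion m g p * insertion m g q"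
    by (simp only: insertion_def sum_product)
  finally show ?thesis .
qed

lemma insertion_mem_gen_ring:
  "(\<And>i. i < m \<Longrightarrow> g i \<in> gen_ring A) \<Longrightarrow> insertion m g p \<in> gen_ring A"
  unfolding insertion_def
  by (intro gen_ring_sum gen_ring.gen_mult gen_ring.gen_const monomial_value_mem_gen_ring)

lemma insertion_image_eq_gen_ring:
  assumes g: "\<And>i. i < m \<Longrightarrow> g i \<in> gen_ring A \<inter> center"
    and A: "A \<subseteq> const_span (g ` {..<m})"
  shows "insertion m g ` poly_ring m = gen_ring A"
proof
  show "insertion m g ` poly_ring m \<subseteq> gen_ring A"
    using g by (auto intro: insertion_mem_gen_ring)
next
  let ?T = "insertion m g ` poly_ring m"
  have g_center: "\<And>i. i < m \<Longrightarrow> g i \<in> center"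
    using g by simp
  have const_T: "const d \<in> ?T" for d
    by (rule rev_image_eqI[OF poly_ring_const]) (simp add: insertion_const)
  have add_T: "x + y \<in> ?T" and mult_T: "x * y \<in> ?T"
    if "x \<in> ?T" "y \<in> ?T" for x y
  proof -
    from that obtain p q where pq: "p \<in> poly_ring m" "q \<in> poly_ring m"
      and xy: "x = insertion m g p" "y = insertion m g q"
      by blast
    show "x + y \<in> ?T"
      by (rule rev_image_eqI[OF poly_ring_add[OF pq]]) (simp add: xy insertion_add)
    show "x * y \<in> ?T"
      by (rule rev_image_eqI[OF poly_ring_mult[OF pq]]) (simp add: xy insertion_mult[OF g_center])
  qed
  have uminus_T: "- x \<in> ?T" if "x \<in> ?T" for x
    using mult_T[OF const_T[of "- 1"] that] by (simp add: const_uminus)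
  have "g i \<in> ?T" if "i < m" for i
    by (rule rev_image_eqI[OF poly_ring_var[OF that]]) (rule insertion_var[OF that, symmetric])
  then have "const_span (g ` {..<m}) \<subseteq> ?T"
    using const_T[of 0] by (intro const_span_least) (auto intro: add_T mult_T const_T)
  with A have A_T: "A \<subseteq> ?T"
    by (rule order_trans)
  show "gen_ring A \<subseteq> ?T"
  proof
    show "p \<in> ?T" if "p \<in> gen_ring A" for p
      using that by induction (auto intro: const_T add_T uminus_T mult_T A_T[THEN subsetD])
  qed
qed

lemma centrally_fg_gen_ring_if_central_span:
  assumes "finite G" "G \<subseteq> gen_ring A \<inter> center" "A \<subseteq> const_span G"
  shows "centrally_fg (gen_ring A)"
proof -
  obtain m :: nat and g where G: "G = g ` {..<m}"
    using assms(1) by (metis finite_conv_nat_seg_image lessThan_def)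
  then have g: "\<And>i. i < m \<Longrightarrow> g i \<in> gen_ring A \<inter> center"
    using assms(2) by auto
  then have "\<And>i. i < m \<Longrightarrow> g i \<in> center"
    by blast
  then show ?thesis
    unfolding centrally_fg_def
    using insertion_image_eq_gen_ring[OF g assms(3)[unfolded G]] insertion_const[of m g 1]
    by (intro exI[of _ m] exI[of _ "insertion m g"])
      (simp add: insertion_add insertion_mult insertion_const)
qed

theorem corollary4p5:
  fixes n :: nat and A :: "('a::division_ring) mpoly set"
  assumes "centrally_finite TYPE('a)"
    and "finite A"
    and "A \<subseteq> poly_ring n"
  shows "centrally_fg (gen_ring A)"
proof -
  interpret const_bimodule "gen_ring A"
    by (rule gen_ring_const_bimodule)
  have "A \<subseteq> gen_ring A"
    using gen_ring.gen_elem by blast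
  also note subset_central_span
  finally obtain G where "finite G" "G \<subseteq> gen_ring A \<inter> center" "A \<subseteq> const_span G"
    by (rule const_span_finite_subset[OF \<open>finite A\<close>])
  then show ?thesis
    by (rule centrally_fg_gen_ring_if_central_span)
qed

end
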